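(* Let $G$ be a graph and $k\in\mathbb N$. Let $\tau$ be a regular, non-principal $\mathcal P'_k$-tangle of $S_k(G)$, and let $\sigma\subseteq\vec S_k(G)$ be a finite star with finite interior. Then $\sigma\not\subseteq\tau$.
   Context: Graphs may be infinite. A separation of $G$ is a set $\{A,B\}$ with $A,B\subseteq V(G)$, $A\cup B=V(G)$ and no edge of $G$ between $A\setminus B$ and $B\setminus A$; its order is $|A\cap B|$. $S_k(G)$ is the set of separations of order $<k$ and $\vec S_k(G)$ the set of their orientations $(A,B)$, $(B,A)$. Order: $(A,B)\le(C,D)$ iff $A\subseteq C$ and $B\supseteq D$. An orientation of $S_k(G)$ is a set containing exactly one orientation of each element; it is consistent if there are no distinct $\{A,B\},\{C,D\}\in S_k(G)$ with $(A,B)<(C,D)$, $(B,A)\in O$, $(C,D)\in O$; regular if it contains no separation of the form $(V(G),A)$; principal if for every set $X$ of fewer than $k$ vertices it contains $(V(G)\setminus V(K),V(K)\cup X)$ for some component $K$ of $G-X$ (non-principal otherwise). A star is a set $\sigma$ of oriented finite-order separations, not containing $(V(G),V(G))$, with $(A,B)\le(D,C)$ for distinct $(A,B),(C,D)\in\sigma$; its interior is $\mathrm{int}(\sigma)=\bigcap_{(A,B)\in\sigma}B$. $\mathcal P'_k$ is the set of all $\rho=\{(A,B),(B\cap C,A\cup D),(B\cap D,A\cup C)\}\subseteq\vec S_k(G)$ with $(A,B),(C,D)\in\vec S_k(G)$ and $|\mathrm{int}(\rho)|<k$. A $\mathcal P'_k$-tangle of $S_k(G)$ is a consistent orientation of $S_k(G)$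 containing no element of $\mathcal P'_k$ as a subset. *)

theory Defs
  imports Main
begin

definition graph :: "'a set \<Rightarrow> ('a \<Rightarrow> 'a \<Rightarrow> bool) \<Rightarrow> bool" where
  "graph V E \<longleftrightarrow> (\<forall>x y. E x y \<longrightarrow> x \<in> V \<and> y \<in> V \<and> x \<noteq> y \<and> E y x)"

definition is_sep :: "'a set \<Rightarrow> ('a \<Rightarrow> 'a \<Rightarrow> bool) \<Rightarrow> 'a set \<Rightarrow> 'a set \<Rightarrow> bool" where
  "is_sep V E A B \<longleftrightarrow> A \<subseteq> V \<and> B \<subseteq> V \<and> A \<union> B = V \<and>
     (\<forall>x\<in>A - B. \<forall>y\<in>B - A. \<not> E x y)"

definition order_lt :: "nat \<Rightarrow> 'a set \<Rightarrow> 'a set \<Rightarrow> bool" where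
  "order_lt k A B \<longleftrightarrow> finite (A \<inter> B) \<and> card (A \<inter> B) < k"

definition Sk :: "'a set \<Rightarrow> ('a \<Rightarrow> 'a \<Rightarrow> bool) \<Rightarrow> nat \<Rightarrow> 'a set set set" where
  "Sk V E k = {{A, B} | A B. is_sep V E A B \<and> order_lt k A B}"

definition vSk :: "'a set \<Rightarrow> ('a \<Rightarrow> 'a \<Rightarrow> bool) \<Rightarrow> nat \<Rightarrow> ('a set \<times> 'a set) set" where
  "vSk V E k = {(A, B). is_sep V E A B \<and> order_lt k A B}"

definition sep_le :: "('a set \<times> 'a set) \<Rightarrow> ('a set \<times> 'a set) \<Rightarrow> bool" where
  "sep_le p q \<longleftrightarrow> fst p \<subseteq> fst q \<and> snd q \<subseteq> snd p"

definition orientation :: "'a set \<Rightarrow> ('a \<Rightarrow> 'a \<Rightarrow> bool) \<Rightarrow> nat \<Rightarrow> ('a set \<times> 'a set) set \<Rightarrow> bool" where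
  "orientation V E k Or \<longleftrightarrow> Or \<subseteq> vSk V E k \<and>
     (\<forall>s\<in>Sk V E k. \<exists>!p. p \<in> Or \<and> {fst p, snd p} = s)"

definition consistent :: "'a set \<Rightarrow> ('a \<Rightarrow> 'a \<Rightarrow> bool) \<Rightarrow> nat \<Rightarrow> ('a set \<times> 'a set) set \<Rightarrow> bool" where
  "consistent V E k Or \<longleftrightarrow> \<not> (\<exists>A B C D. {A, B} \<in> Sk V E k \<and> {C, D} \<in> Sk V E k \<and>
     {A, B} \<noteq> {C, D} \<and> sep_le (A, B) (C, D) \<and> (A, B) \<noteq> (C, D) \<and>
     (B, A) \<in> Or \<and> (C, D) \<in> Or)"

definition regular :: "'a set \<Rightarrow> ('a set \<times> 'a set) set \<Rightarrow> bool" where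
  "regular V Or \<longleftrightarrow> (\<forall>A. (V, A) \<notin> Or)"

definition components :: "'a set \<Rightarrow> ('a \<Rightarrow> 'a \<Rightarrow> bool) \<Rightarrow> 'a set \<Rightarrow> 'a set set" where
  "components V E X = {{w. (\<lambda>x y. E x y \<and> x \<in> V - X \<and> y \<in> V - X)\<^sup>*\<^sup>* v w} | v. v \<in> V - X}"

definition principal :: "'a set \<Rightarrow> ('a \<Rightarrow> 'a \<Rightarrow> bool) \<Rightarrow> nat \<Rightarrow> ('a set \<times> 'a set) set \<Rightarrow> bool" where
  "principal V E k Or \<longleftrightarrow> (\<forall>X. X \<subseteq> V \<and> finite X \<and> card X < k \<longrightarrow>
     (\<exists>K\<in>components V E X. (V - K, K \<union> X) \<in> Or))"

definition star :: "'a set \<Rightarrow> ('a \<Rightarrow> 'a \<Rightarrow> bool) \<Rightarrow> ('a set \<times> 'a set) set \<Rightarrow> bool" where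
  "star V E \<sigma> \<longleftrightarrow> (\<forall>(A, B)\<in>\<sigma>. is_sep V E A B \<and> finite (A \<inter> B)) \<and> (V, V) \<notin> \<sigma> \<and>
     (\<forall>(A, B)\<in>\<sigma>. \<forall>(C, D)\<in>\<sigma>. (A, B) \<noteq> (C, D) \<longrightarrow> sep_le (A, B) (D, C))"

text \<open>interior: intersection of the second sides, taken inside V (so the empty
family has interior V(G)).\<close>
definition interior_sep :: "'a set \<Rightarrow> ('a set \<times> 'a set) set \<Rightarrow> 'a set" where
  "interior_sep V \<sigma> = V \<inter> \<Inter> (snd ` \<sigma>)"

definition Pk' :: "'a set \<Rightarrow> ('a \<Rightarrow> 'a \<Rightarrow> bool) \<Rightarrow> nat \<Rightarrow> ('a set \<times> 'a set) set set" where
  "Pk' V E k = {\<rho>. \<exists>A B C D. (A, B) \<in> vSk V E k \<and> (C, D) \<in> vSk V E k \<and>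
     \<rho> = {(A, B), (B \<inter> C, A \<union> D), (B \<inter> D, A \<union> C)} \<and> \<rho> \<subseteq> vSk V E k \<and>
     finite (interior_sep V \<rho>) \<and> card (interior_sep V \<rho>) < k}"

definition Pk'_tangle :: "'a set \<Rightarrow> ('a \<Rightarrow> 'a \<Rightarrow> bool) \<Rightarrow> nat \<Rightarrow> ('a set \<times> 'a set) set \<Rightarrow> bool" where
  "Pk'_tangle V E k Or \<longleftrightarrow> orientation V E k Or \<and> consistent V E k Or \<and>
     (\<forall>\<rho>\<in>Pk' V E k. \<not> \<rho> \<subseteq> Or)"

end

theory Submission
  imports Defs
begin

text \<open>Let \<open>X\<close> witness that \<open>\<tau>\<close> is not principal, so \<open>\<tau>\<close> contains
  \<open>(K \<union> X, V - K)\<close> for every component \<open>K\<close> of \<open>G - X\<close>. Since \<open>\<tau>\<close> is consistent and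
  avoids \<open>\<P>'\<^sub>k\<close>, it is closed under joins \<open>(A \<union> C, B \<inter> D)\<close> whose relevant separator
  lies in a set of fewer than \<open>k\<close> vertices. Starting from \<open>(X, V)\<close> and keeping every
  separator inside \<open>X\<close>, we first absorb the components meeting the finite interior of
  \<open>\<sigma>\<close> and then, if \<open>\<sigma> \<subseteq> \<tau>\<close>, every separation of \<open>\<sigma>\<close>. The small sides of \<open>\<sigma>\<close>
  together with its interior cover \<open>V\<close>, so we arrive at \<open>(V, W) \<in> \<tau>\<close>, contradicting
  regularity.\<close>

lemma orientation_contains_either:
  assumes "orientation V E k \<tau>" and "(A, B) \<in> vSk V E k"
  shows "(A, B) \<in> \<tau> \<or> (B, A) \<in> \<tau>"
proof -
  have "{A, B} \<in> Sk V E k" using assms(2) unfolding Sk_def vSk_def by blast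
  then obtain p where "p \<in> \<tau>" "{fst p, snd p} = {A, B}"
    using assms(1) unfolding orientation_def by metis
  then show ?thesis by (cases p) (auto simp: doubleton_eq_iff)
qed

lemma is_sep_swap: "graph V E \<Longrightarrow> is_sep V E A B \<Longrightarrow> is_sep V E B A"
  unfolding is_sep_def graph_def by blast

lemma is_sep_Int_Un:
  assumes g: "graph V E" and AB: "is_sep V E A B" and CD: "is_sep V E C D"
  shows "is_sep V E (B \<inter> C) (A \<union> D)"
proof -
  have V: "A \<subseteq> V" "B \<subseteq> V" "A \<union> B = V" "C \<subseteq> V" "D \<subseteq> V" "C \<union> D = V"
    and AB_E: "\<And>x y. x \<in> A - B \<Longrightarrow> y \<in> B - A \<Longrightarrow> \<not> E x y"
    and CD_E: "\<And>x y. x \<in> C - D \<Longrightarrow> y \<in> D - C \<Longrightarrow> \<not> E x y"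
    using AB CD unfolding is_sep_def by auto
  have "\<not> E x y" if x: "x \<in> B \<inter> C - (A \<union> D)" and y: "y \<in> A \<union> D - B \<inter> C" for x y
  proof -
    have "y \<in> A - B \<or> y \<in> D - C" using y V by blast
    then show ?thesis using x AB_E CD_E g unfolding graph_def by blast
  qed
  then show ?thesis using V unfolding is_sep_def by blast
qed

lemma consistent_regular_down_closed:
  assumes o: "orientation V E k \<tau>" and c: "consistent V E k \<tau>" and r: "regular V \<tau>"
    and CD: "(C, D) \<in> \<tau>" and AB: "(A, B) \<in> vSk V E k" and le: "sep_le (A, B) (C, D)"
  shows "(A, B) \<in> \<tau>"
proof (cases "{A, B} = {C, D}")
  case True
  have "is_sep V E C D" using o CD unfolding orientation_def vSk_def by blast
  then have "(A, B) = (C, D) \<or> C = V"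
    using True le unfolding sep_le_def is_sep_def by (auto simp: doubleton_eq_iff)
  then show ?thesis using CD r unfolding regular_def by blast
next
  case False
  have "{A, B} \<in> Sk V E k" "{C, D} \<in> Sk V E k"
    using AB o CD unfolding orientation_def Sk_def vSk_def by blast+
  then have "(B, A) \<notin> \<tau>"
    using c CD le False unfolding consistent_def by blast
  then show ?thesis using orientation_contains_either[OF o AB] by blast
qed

text \<open>The interior of the triple \<open>{(A, B), (B \<inter> C, A \<union> D), (B \<inter> D, A \<union> C)}\<close> is
  \<open>(A \<inter> B) \<union> (B \<inter> C \<inter> D)\<close>; the first two members lie in \<open>\<tau>\<close>, so the third cannot.\<close>

lemma tangle_join:
  assumes g: "graph V E" and t: "Pk'_tangle V E k \<tau>" and r: "regular V \<tau>"
    and AB: "(A, B) \<in> \<tau>" and CD: "(C, D) \<in> \<tau>"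
    and X: "A \<inter> B \<subseteq> X" "B \<inter> C \<inter> D \<subseteq> X" "finite X" "card X < k"
  shows "(A \<union> C, B \<inter> D) \<in> \<tau>"
proof -
  have o: "orientation V E k \<tau>" and c: "consistent V E k \<tau>"
    using t unfolding Pk'_tangle_def by auto
  have ABv: "(A, B) \<in> vSk V E k" and CDv: "(C, D) \<in> vSk V E k"
    using o AB CD unfolding orientation_def by blast+
  then have sAB: "is_sep V E A B" and sCD: "is_sep V E C D" unfolding vSk_def by auto
  have small: "finite S \<and> card S < k" if "S \<subseteq> X" for S
    using that X(3,4) by (meson card_mono finite_subset le_less_trans)
  have "(B \<inter> C) \<inter> (A \<union> D) \<subseteq> X" using X(1,2) by blast
  then have v1: "(B \<inter> C, A \<union> D) \<in> vSk V E k"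
    using is_sep_Int_Un[OF g sAB sCD] small unfolding vSk_def order_lt_def by blast
  have "(B \<inter> D) \<inter> (A \<union> C) \<subseteq> X" using X(1,2) by blast
  then have v2: "(B \<inter> D, A \<union> C) \<in> vSk V E k"
    using is_sep_Int_Un[OF g sAB is_sep_swap[OF g sCD]] small unfolding vSk_def order_lt_def by blast
  have in1: "(B \<inter> C, A \<union> D) \<in> \<tau>"
    using consistent_regular_down_closed[OF o c r CD v1] unfolding sep_le_def by auto
  let ?\<rho> = "{(A, B), (B \<inter> C, A \<union> D), (B \<inter> D, A \<union> C)}"
  have "interior_sep V ?\<rho> \<subseteq> X"
    using X(1,2) unfolding interior_sep_def by auto
  then have "?\<rho> \<in> Pk' V E k"
    using small ABv CDv v1 v2 unfolding Pk'_def by blast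
  then have "\<not> ?\<rho> \<subseteq> \<tau>" using t unfolding Pk'_tangle_def by blast
  then have "(B \<inter> D, A \<union> C) \<notin> \<tau>" using AB in1 by simp
  then show ?thesis using orientation_contains_either[OF o v2] by blast
qed

lemma regular_contains_small_side:
  assumes o: "orientation V E k \<tau>" and r: "regular V \<tau>"
    and X: "X \<subseteq> V" "finite X" "card X < k"
  shows "(X, V) \<in> \<tau>"
proof -
  have "(X, V) \<in> vSk V E k"
    using X unfolding vSk_def is_sep_def order_lt_def by (auto simp: Int_absorb2)
  then show ?thesis using orientation_contains_either[OF o] r unfolding regular_def by blast
qed

definition component_of :: "'a set \<Rightarrow> ('a \<Rightarrow> 'a \<Rightarrow> bool) \<Rightarrow> 'a set \<Rightarrow> 'a \<Rightarrow> 'a set" where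
  "component_of V E X y = {w. (\<lambda>x y. E x y \<and> x \<in> V - X \<and> y \<in> V - X)\<^sup>*\<^sup>* y w}"

lemma component_of_subset:
  assumes "y \<in> V - X"
  shows "component_of V E X y \<subseteq> V - X"
proof
  fix w assume "w \<in> component_of V E X y"
  then have "(\<lambda>x y. E x y \<and> x \<in> V - X \<and> y \<in> V - X)\<^sup>*\<^sup>* y w"
    unfolding component_of_def by simp
  then show "w \<in> V - X" using assms by (induction rule: rtranclp_induct) auto
qed

lemma component_of_sep:
  assumes g: "graph V E" and XV: "X \<subseteq> V" and y: "y \<in> V - X"
  defines "K \<equiv> component_of V E X y"
  shows "is_sep V E (V - K) (K \<union> X)" and "(V - K) \<inter> (K \<union> X) = X"
    and "y \<in> K" and "K \<in> components V E X"
proof -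
  have KV: "K \<subseteq> V - X" using component_of_subset[OF y] unfolding K_def .
  have "\<not> E x w" if x: "x \<in> V - K - X" and w: "w \<in> K" for x w
  proof
    assume "E x w"
    then have "(\<lambda>x y. E x y \<and> x \<in> V - X \<and> y \<in> V - X) w x"
      using g x w KV unfolding graph_def by blast
    then have "x \<in> K"
      using w unfolding K_def component_of_def by (simp add: rtranclp.rtrancl_into_rtrancl)
    then show False using x by blast
  qed
  then show "is_sep V E (V - K) (K \<union> X)"
    unfolding is_sep_def using KV XV by blast
  show "(V - K) \<inter> (K \<union> X) = X" using KV XV by blast
  show "y \<in> K" unfolding K_def component_of_def by simp
  show "K \<in> components V E X"
    using y unfolding K_def component_of_def components_def by blast
qed

lemma tangle_join_finite:
  assumes g: "graph V E" and t: "Pk'_tangle V E k \<tau>" and r: "regular V \<tau>"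
    and UW: "(U, W) \<in> \<tau>" "U \<inter> W \<subseteq> X" and X: "finite X" "card X < k"
    and F: "finite F" "F \<subseteq> \<tau>" "\<forall>(A, B) \<in> F. A \<inter> B \<subseteq> U \<union> X"
  shows "\<exists>W'. (U \<union> \<Union> (fst ` F), W') \<in> \<tau> \<and> (U \<union> \<Union> (fst ` F)) \<inter> W' \<subseteq> X"
  using F
proof (induction F rule: finite_induct)
  case empty
  then show ?case using UW by auto
next
  case (insert p F)
  obtain A B where p: "p = (A, B)" by (cases p)
  let ?U = "U \<union> \<Union> (fst ` F)"
  obtain W' where W': "(?U, W') \<in> \<tau>" "?U \<inter> W' \<subseteq> X"
    using insert by auto
  have AB: "(A, B) \<in> \<tau>" "A \<inter> B \<subseteq> U \<union> X" using insert.prems p by auto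
  have "(?U \<union> A, W' \<inter> B) \<in> \<tau>"
    using tangle_join[OF g t r W'(1) AB(1)] W'(2) AB(2) X by blast
  moreover have "(?U \<union> A) \<inter> (W' \<inter> B) \<subseteq> X" using W'(2) AB(2) by blast
  ultimately show ?case using p by (intro exI[of _ "W' \<inter> B"]) (auto simp: Un_ac)
qed

lemma nonprincipal_absorbs_finite:
  assumes g: "graph V E" and t: "Pk'_tangle V E k \<tau>" and r: "regular V \<tau>"
    and X: "X \<subseteq> V" "finite X" "card X < k"
    and np: "\<forall>K \<in> components V E X. (V - K, K \<union> X) \<notin> \<tau>"
    and Y: "finite Y" "Y \<subseteq> V"
  shows "\<exists>U W. (U, W) \<in> \<tau> \<and> U \<inter> W \<subseteq> X \<and> Y \<subseteq> U"
proof -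
  have o: "orientation V E k \<tau>" using t unfolding Pk'_tangle_def by auto
  define F where "F = (\<lambda>y. (component_of V E X y \<union> X, V - component_of V E X y)) ` (Y - X)"
  have "F \<subseteq> \<tau>"
  proof
    fix p assume "p \<in> F"
    then obtain y where y: "y \<in> V - X"
      and p: "p = (component_of V E X y \<union> X, V - component_of V E X y)"
      using Y unfolding F_def by blast
    note K = component_of_sep[OF g X(1) y]
    have "(V - component_of V E X y, component_of V E X y \<union> X) \<in> vSk V E k"
      using K(1,2) X unfolding vSk_def order_lt_def by simp
    then show "p \<in> \<tau>" using orientation_contains_either[OF o] np K(4) p by blast
  qed
  moreover have "finite F" using Y(1) unfolding F_def by simp
  moreover have "\<forall>(A, B) \<in> F. A \<inter> B \<subseteq> X"
    using component_of_subset unfolding F_def by fastforce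
  ultimately obtain W where "(X \<union> \<Union> (fst ` F), W) \<in> \<tau>" "(X \<union> \<Union> (fst ` F)) \<inter> W \<subseteq> X"
    using tangle_join_finite[OF g t r regular_contains_small_side[OF o r X], of X] X(2,3)
    by (simp add: Un_absorb) blast
  moreover have "Y \<subseteq> X \<union> \<Union> (fst ` F)"
  proof
    fix y assume "y \<in> Y"
    show "y \<in> X \<union> \<Union> (fst ` F)"
    proof (cases "y \<in> X")
      case False
      with \<open>y \<in> Y\<close> have "component_of V E X y \<union> X \<in> fst ` F"
        unfolding F_def by force
      moreover have "y \<in> component_of V E X y"
        using component_of_sep(3)[OF g X(1)] False \<open>y \<in> Y\<close> Y(2) by blast
      ultimately show ?thesis by blast
    qed simp
  qed
  ultimately show ?thesis by blast
qed

lemma star_sep_subset_interior: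
  assumes "star V E \<sigma>" and "(A, B) \<in> \<sigma>"
  shows "A \<inter> B \<subseteq> interior_sep V \<sigma>"
proof -
  have "is_sep V E A B" using assms unfolding star_def by blast
  then have "A \<subseteq> V" unfolding is_sep_def by blast
  moreover have "A \<inter> B \<subseteq> snd q" if "q \<in> \<sigma>" for q
  proof (cases "q = (A, B)")
    case False
    obtain C D where q: "q = (C, D)" by fastforce
    then have "sep_le (A, B) (D, C)" using False assms that unfolding star_def by blast
    then show ?thesis unfolding q sep_le_def by auto
  qed simp
  ultimately show ?thesis unfolding interior_sep_def by blast
qed

lemma interior_Un_small_sides:
  assumes "\<forall>(A, B) \<in> \<sigma>. A \<union> B = V"
  shows "V = interior_sep V \<sigma> \<union> \<Union> (fst ` \<sigma>)"
  using assms unfolding interior_sep_def by fastforce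

theorem lemma2p4:
  fixes V :: "'a set" and E :: "'a \<Rightarrow> 'a \<Rightarrow> bool" and k :: nat
    and \<tau> \<sigma> :: "('a set \<times> 'a set) set"
  assumes "graph V E"
    and "Pk'_tangle V E k \<tau>" and "regular V \<tau>" and "\<not> principal V E k \<tau>"
    and "\<sigma> \<subseteq> vSk V E k" and "star V E \<sigma>" and "finite \<sigma>"
    and "finite (interior_sep V \<sigma>)"
  shows "\<not> \<sigma> \<subseteq> \<tau>"
proof
  assume "\<sigma> \<subseteq> \<tau>"
  obtain X where X: "X \<subseteq> V" "finite X" "card X < k"
    and np: "\<forall>K \<in> components V E X. (V - K, K \<union> X) \<notin> \<tau>"
    using assms(4) unfolding principal_def by blast
  obtain U W where UW: "(U, W) \<in> \<tau>" "U \<inter> W \<subseteq> X" "interior_sep V \<sigma> \<subseteq> U"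
    using nonprincipal_absorbs_finite[OF assms(1-3) X np assms(8)]
    unfolding interior_sep_def by blast
  have "\<forall>(A, B) \<in> \<sigma>. A \<inter> B \<subseteq> U \<union> X"
    using star_sep_subset_interior[OF assms(6)] UW(3) by blast
  then obtain W' where W': "(U \<union> \<Union> (fst ` \<sigma>), W') \<in> \<tau>"
    using tangle_join_finite[OF assms(1-3) UW(1,2) X(2,3) assms(7) \<open>\<sigma> \<subseteq> \<tau>\<close>] by blast
  have "\<forall>(A, B) \<in> \<sigma>. A \<union> B = V"
    using assms(5) unfolding vSk_def is_sep_def by auto
  then have cover: "V = interior_sep V \<sigma> \<union> \<Union> (fst ` \<sigma>)"
    by (rule interior_Un_small_sides)
  have "(U, W) \<in> vSk V E k"
    using UW(1) assms(2) unfolding Pk'_tangle_def orientation_def by blast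
  then have "U \<subseteq> V" unfolding vSk_def is_sep_def by simp
  with cover UW(3) have "U \<union> \<Union> (fst ` \<sigma>) = V" by blast
  then show False using W' assms(3) unfolding regular_def by metis
qed

end
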